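(* Let $n\ge1$ and let $\mathbf 1=(1,1,\dots,1)$ ($n$ entries). Then (i) the map $w\mapsto\varphi_r((w,\mathbf 1))$ is a bijection from $M_{rb}(n)$ onto the set $NC_n$ of noncrossing partitions of $[n]$; (ii) the map $w\mapsto\varphi_l((w,\mathbf 1))$ is a bijection from $M_{rb}(n)$ onto the set $NN_n$ of nonnesting partitions of $[n]$.
   Context: A Motzkin path of length $n$ is a sequence of points $s_0=(0,0),s_1,\dots,s_n=(n,0)$, $s_i=(i,y_i)$, $y_i\ge0$, each step $(s_{i-1},s_i)$ East, North-East or South-East ($y_i-y_{i-1}=0,1,-1$); step $(s_{i-1},s_i)$ has index $i$ and height $y_{i-1}$. A restricted bicolored Motzkin path is a Motzkin path whose East steps are colored red or blue, every blue East step having height $>0$; $M_{rb}(n)$ is the set of these of length $n$. A Charlier diagram of length $n$ is a pair $(w,\xi)$, $w\in M_{rb}(n)$, $\xi=(\xi_1,\dots,\xi_n)$ integers with $\xi_i=1$ if step $i$ is North-East or red East, and $1\le\xi_i\le k$ if step $i$ is South-East or blue East of height $k$. $\varphi_l(w,\xi)$ is the partition of $[n]$ obtained thus: maintain a set $V$ (initially empty) and edge set $E$; for $i=1,\dots,n$: if step $i$ is North-East add $i$ to $V$; if red East do nothing; if South-East or blue East, let $x$ be the $\xi_i$-th smallest element of $V$, add edge $(x,i)$, remove $x$ from $V$, and if blue East add $i$ to $V$; the blocks are the connected components of $([n],E)$. $\varphi_r$ is the same with "$\xi_i$-th largest". For a partition of $[n]$ (set of disjoint nonempty blocks covering $[n]$),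 edges are pairs $(i,j)$, $i<j$, of consecutive elements of a block; two edges $(i_1,j_1),(i_2,j_2)$ cross if $i_1<i_2<j_1<j_2$ and nest if $i_1<i_2<j_2<j_1$. A partition is noncrossing (resp. nonnesting) if no two of its edges cross (resp. nest). *)

theory Defs
  imports Main "HOL-Library.Disjoint_Sets"
begin

text \<open>Steps: North-East, South-East, red East, blue East.\<close>
datatype step = NE | SE | ER | EB

fun delta :: "step \<Rightarrow> int" where
  "delta NE = 1" | "delta SE = -1" | "delta ER = 0" | "delta EB = 0"

text \<open>Height reached after a sequence of steps (starting at height 0).
  The height of step i (1-based) is ht (take (i-1) w).\<close>
definition ht :: "step list \<Rightarrow> int" where
  "ht w = sum_list (map delta w)"

definition motzkin :: "step list \<Rightarrow> bool" where
  "motzkin w \<longleftrightarrow> (\<forall>k \<le> length w. ht (take k w) \<ge> 0) \<and> ht w = 0"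

definition Mrb :: "nat \<Rightarrow> step list set" where
  "Mrb n = {w. length w = n \<and> motzkin w \<and>
                (\<forall>i < length w. w ! i = EB \<longrightarrow> ht (take i w) > 0)}"

text \<open>Charlier diagrams (w, xi); xi is a list, xi ! (i-1) = xi_i.\<close>
definition charlier :: "nat \<Rightarrow> step list \<Rightarrow> nat list \<Rightarrow> bool" where
  "charlier n w xi \<longleftrightarrow> w \<in> Mrb n \<and> length xi = n \<and>
     (\<forall>i < n. (w ! i \<in> {NE, ER} \<longrightarrow> xi ! i = 1) \<and>
              (w ! i \<in> {SE, EB} \<longrightarrow> 1 \<le> xi ! i \<and> int (xi ! i) \<le> ht (take i w)))"

definition kth_smallest :: "nat set \<Rightarrow> nat \<Rightarrow> nat" where
  "kth_smallest V k = sorted_list_of_set V ! (k - 1)"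

definition kth_largest :: "nat set \<Rightarrow> nat \<Rightarrow> nat" where
  "kth_largest V k = rev (sorted_list_of_set V) ! (k - 1)"

fun phi_step :: "(nat set \<Rightarrow> nat \<Rightarrow> nat) \<Rightarrow> nat set \<times> (nat \<times> nat) set
                  \<Rightarrow> nat \<times> step \<times> nat \<Rightarrow> nat set \<times> (nat \<times> nat) set" where
  "phi_step sel (V, E) (i, s, k) =
     (case s of
        NE \<Rightarrow> (insert i V, E)
      | ER \<Rightarrow> (V, E)
      | SE \<Rightarrow> (V - {sel V k}, insert (sel V k, i) E)
      | EB \<Rightarrow> (insert i (V - {sel V k}), insert (sel V k, i) E))"

definition phi_edges :: "(nat set \<Rightarrow> nat \<Rightarrow> nat) \<Rightarrow> step list \<Rightarrow> nat list \<Rightarrow> (nat \<times> nat) set" where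
  "phi_edges sel w xi =
     snd (foldl (phi_step sel) ({}, {}) (zip [1..<length w + 1] (zip w xi)))"

definition components :: "nat \<Rightarrow> (nat \<times> nat) set \<Rightarrow> nat set set" where
  "components n E = {1..n} // ((E \<union> E\<inverse>) \<inter> ({1..n} \<times> {1..n}))\<^sup>*"

definition phi_l :: "step list \<Rightarrow> nat list \<Rightarrow> nat set set" where
  "phi_l w xi = components (length w) (phi_edges kth_smallest w xi)"

definition phi_r :: "step list \<Rightarrow> nat list \<Rightarrow> nat set set" where
  "phi_r w xi = components (length w) (phi_edges kth_largest w xi)"

definition part_edges :: "nat set set \<Rightarrow> (nat \<times> nat) set" where
  "part_edges P = {(i, j). \<exists>B\<in>P. i \<in> B \<and> j \<in> B \<and> i < j \<and> (\<forall>k\<in>B. \<not> (i < k \<and> k < j))}"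

definition noncrossing :: "nat set set \<Rightarrow> bool" where
  "noncrossing P \<longleftrightarrow> \<not> (\<exists>i1 j1 i2 j2. (i1, j1) \<in> part_edges P \<and> (i2, j2) \<in> part_edges P \<and>
                          i1 < i2 \<and> i2 < j1 \<and> j1 < j2)"

definition nonnesting :: "nat set set \<Rightarrow> bool" where
  "nonnesting P \<longleftrightarrow> \<not> (\<exists>i1 j1 i2 j2. (i1, j1) \<in> part_edges P \<and> (i2, j2) \<in> part_edges P \<and>
                          i1 < i2 \<and> i2 < j2 \<and> j2 < j1)"

definition NC :: "nat \<Rightarrow> nat set set set" where
  "NC n = {P. partition_on {1..n} P \<and> noncrossing P}"

definition NN :: "nat \<Rightarrow> nat set set set" where
  "NN n = {P. partition_on {1..n} P \<and> nonnesting P}"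

end

theory Submission
  imports Defs
begin

(* With every xi_i = 1 the construction always closes the largest (phi_r) or the smallest
   (phi_l) currently open vertex: V is a stack or a queue.

   The edge set produced from a path in M_rb(n) is a chain graph on [n]: its edges (x, y)
   have x < y, and every vertex has at most one outgoing and at most one incoming edge.
   Chain graphs on [n] are exactly the edge sets of partitions of [n], with components and
   part_edges mutually inverse.  The path is read back from its edge set, since step i is
   NE, SE, blue E or red E according as i is only a left end, only a right end, both or
   neither.  Conversely, running the construction on the path of a chain graph E gives E
   back iff every edge (p, t+1) joins t+1 to the element the selector picks among the
   vertices open at time t.  For the largest open vertex this says that no two edges of E
   cross, for the smallest that no two edges nest. *)

section \<open>Chain graphs and partitions\<close>

lemma equiv_rtrancl_sym: "sym r \<Longrightarrow> equiv UNIV (r\<^sup>*)"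
  by (intro equivI refl_rtrancl sym_rtrancl trans_rtrancl) auto

lemma partition_on_block_unique:
  "partition_on A P \<Longrightarrow> B \<in> P \<Longrightarrow> B' \<in> P \<Longrightarrow> x \<in> B \<Longrightarrow> x \<in> B' \<Longrightarrow> B = B'"
  using disjointD[OF partition_onD2] by blast

definition chain_graph :: "nat \<Rightarrow> (nat \<times> nat) set \<Rightarrow> bool" where
  "chain_graph n E \<longleftrightarrow>
     E \<subseteq> {(x, y). 1 \<le> x \<and> x < y \<and> y \<le> n} \<and> single_valued E \<and> single_valued (E\<inverse>)"

lemma chain_graphD:
  assumes "chain_graph n E"
  shows chain_graph_edge: "(x, y) \<in> E \<Longrightarrow> 1 \<le> x \<and> x < y \<and> y \<le> n"
    and chain_graph_out_unique: "(x, y) \<in> E \<Longrightarrow> (x, z) \<in> E \<Longrightarrow> y = z"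
    and chain_graph_in_unique: "(x, z) \<in> E \<Longrightarrow> (y, z) \<in> E \<Longrightarrow> x = y"
  using assms by (auto simp: chain_graph_def dest: single_valuedD)

lemma chain_graph_mono: "chain_graph t E \<Longrightarrow> t \<le> t' \<Longrightarrow> chain_graph t' E"
  by (auto simp: chain_graph_def)

lemma chain_graph_insert:
  assumes "chain_graph t E" "p \<notin> Domain E" "1 \<le> p" "p \<le> t"
  shows "chain_graph (Suc t) (insert (p, Suc t) E)"
  using assms unfolding chain_graph_def single_valued_def by auto

lemma chain_graph_rtrancl_le:
  assumes "chain_graph n E" and "(x, y) \<in> E\<^sup>*"
  shows "x \<le> y"
  using assms(2) by induction (auto dest: chain_graph_edge[OF assms(1)])

text \<open>Single-valuedness of \<open>E\<close> and of \<open>E\<inverse>\<close> makes both confluent, so every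
  component of a chain graph is a chain.\<close>
lemma chain_graph_connected:
  assumes E: "chain_graph n E" and "(x, y) \<in> (E \<union> E\<inverse>)\<^sup>*"
  shows "(x, y) \<in> E\<^sup>* \<or> (y, x) \<in> E\<^sup>*"
  using assms(2)
proof induction
  case (step y z)
  have sv: "single_valued E" "single_valued (E\<inverse>)"
    using E by (auto simp: chain_graph_def)
  from step.hyps(2) consider "(y, z) \<in> E" | "(z, y) \<in> E" by blast
  then show ?case
  proof cases
    case 1
    with step.IH show ?thesis
      using single_valued_confluent[OF sv(1)] by (blast intro: rtrancl_into_rtrancl)
  next
    case 2
    then have "(y, z) \<in> (E\<inverse>)\<^sup>*"
      by auto
    with step.IH show ?thesis
      using single_valued_confluent[OF sv(2), of y x z]
      by (auto simp: rtrancl_converse intro: rtrancl_trans)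
  qed
qed simp

lemma components_chain_graph:
  assumes "chain_graph n E"
  shows "components n E = {1..n} // (E \<union> E\<inverse>)\<^sup>*"
proof -
  have "(E \<union> E\<inverse>) \<inter> ({1..n} \<times> {1..n}) = E \<union> E\<inverse>"
    using assms by (auto dest: chain_graph_edge)
  then show ?thesis
    by (simp add: components_def)
qed

lemma partition_on_components: "partition_on {1..n} (components n E)"
proof -
  define R where "R = (E \<union> E\<inverse>) \<inter> ({1..n} \<times> {1..n})"
  have eq: "equiv UNIV (R\<^sup>*)"
    unfolding R_def by (rule equiv_rtrancl_sym) (auto simp: sym_def)
  have closed: "R\<^sup>* `` {1..n} = {1..n}"
    by (rule Image_closed_trancl) (auto simp: R_def)
  show ?thesis
    unfolding components_def R_def[symmetric]
  proof (rule partition_onI)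
    show "\<Union> ({1..n} // R\<^sup>*) = {1..n}"
      using closed by (auto simp: quotient_def)
    show "disjnt p q" if "p \<in> {1..n} // R\<^sup>*" "q \<in> {1..n} // R\<^sup>*" "p \<noteq> q" for p q
      using that quotient_disj[OF eq] by (auto simp: quotient_def disjnt_def)
    show "{} \<notin> {1..n} // R\<^sup>*"
      by (auto simp: quotient_def)
  qed
qed

lemma chain_graph_class_rtrancl:
  assumes E: "chain_graph n E" and B: "B \<in> {1..n} // (E \<union> E\<inverse>)\<^sup>*" "i \<in> B" "j \<in> B"
    and "i < j"
  shows "(i, j) \<in> E\<^sup>*"
proof -
  have "equiv UNIV ((E \<union> E\<inverse>)\<^sup>*)"
    by (rule equiv_rtrancl_sym) (auto simp: sym_def)
  then have "(i, j) \<in> (E \<union> E\<inverse>)\<^sup>*"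
    using B quotient_eq_iff[of UNIV _ B B i j] by (auto simp: quotient_def)
  then show ?thesis
    using chain_graph_connected[OF E] chain_graph_rtrancl_le[OF E, of j i] \<open>i < j\<close> by auto
qed

lemma part_edges_components:
  assumes E: "chain_graph n E"
  shows "part_edges (components n E) = E"
proof -
  let ?R = "(E \<union> E\<inverse>)\<^sup>*"
  show ?thesis
    unfolding components_chain_graph[OF E]
  proof (intro subset_antisym subrelI)
    fix i j assume "(i, j) \<in> part_edges ({1..n} // ?R)"
    then obtain B where B: "B \<in> {1..n} // ?R" "i \<in> B" "j \<in> B" "i < j"
      and gap: "\<forall>k\<in>B. \<not> (i < k \<and> k < j)"
      by (auto simp: part_edges_def)
    obtain m where m: "(i, m) \<in> E" "(m, j) \<in> E\<^sup>*"
      using chain_graph_class_rtrancl[OF E B] \<open>i < j\<close> by (auto elim: converse_rtranclE)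
    have "m \<in> B"
      using B m(1) by (auto simp: quotient_def intro: rtrancl_into_rtrancl)
    moreover have "i < m" "m \<le> j"
      using chain_graph_edge[OF E m(1)] chain_graph_rtrancl_le[OF E m(2)] by auto
    ultimately have "m = j"
      using gap by fastforce
    with m show "(i, j) \<in> E"
      by simp
  next
    fix i j assume ij: "(i, j) \<in> E"
    let ?B = "?R `` {i}"
    have B: "?B \<in> {1..n} // ?R" "i \<in> ?B" "j \<in> ?B"
      using ij chain_graph_edge[OF E ij] by (auto simp: quotient_def)
    have "\<not> (i < k \<and> k < j)" if k: "k \<in> ?B" for k
    proof
      assume ikj: "i < k \<and> k < j"
      then obtain m where m: "(i, m) \<in> E" "(m, k) \<in> E\<^sup>*"
        using chain_graph_class_rtrancl[OF E B(1,2) k] by (auto elim: converse_rtranclE)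
      then show False
        using chain_graph_out_unique[OF E ij m(1)] chain_graph_rtrancl_le[OF E m(2)] ikj by simp
    qed
    with B ij chain_graph_edge[OF E ij] show "(i, j) \<in> part_edges ({1..n} // ?R)"
      unfolding part_edges_def by blast
  qed
qed

lemma chain_graph_part_edges:
  assumes P: "partition_on {1..n} P"
  shows "chain_graph n (part_edges P)"
proof -
  have out: "y = z" if "(x, y) \<in> part_edges P" "(x, z) \<in> part_edges P" for x y z
  proof -
    from that obtain B B' where "B \<in> P" "x \<in> B" "y \<in> B" "x < y" "\<forall>k\<in>B. \<not> (x < k \<and> k < y)"
      and "B' \<in> P" "x \<in> B'" "z \<in> B'" "x < z" "\<forall>k\<in>B'. \<not> (x < k \<and> k < z)"
      by (auto simp: part_edges_def)
    then show ?thesis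
      using partition_on_block_unique[OF P, of B B' x] by (metis linorder_neqE_nat)
  qed
  have into: "x = y" if "(x, z) \<in> part_edges P" "(y, z) \<in> part_edges P" for x y z
  proof -
    from that obtain B B' where "B \<in> P" "x \<in> B" "z \<in> B" "x < z" "\<forall>k\<in>B. \<not> (x < k \<and> k < z)"
      and "B' \<in> P" "y \<in> B'" "z \<in> B'" "y < z" "\<forall>k\<in>B'. \<not> (y < k \<and> k < z)"
      by (auto simp: part_edges_def)
    then show ?thesis
      using partition_on_block_unique[OF P, of B B' z] by (metis linorder_neqE_nat)
  qed
  have "part_edges P \<subseteq> {(x, y). 1 \<le> x \<and> x < y \<and> y \<le> n}"
    using partition_onD1[OF P] by (fastforce simp: part_edges_def)
  then show ?thesis
    unfolding chain_graph_def by (auto intro!: single_valuedI dest: out into)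
qed

lemma part_edges_rtrancl:
  assumes "B \<in> P" "a \<in> B" "b \<in> B" "a \<le> b"
  shows "(a, b) \<in> (part_edges P)\<^sup>*"
  using assms(3,4)
proof (induction b rule: less_induct)
  case (less b)
  show ?case
  proof (cases "a = b")
    case False
    define m where "m = Max {k \<in> B. k < b}"
    have below: "finite {k \<in> B. k < b}" "a \<in> {k \<in> B. k < b}"
      using less.prems False assms(2) by auto
    have "m \<in> {k \<in> B. k < b}"
      unfolding m_def using Max_in[OF below(1)] below(2) by blast
    moreover have "\<not> (m < k \<and> k < b)" if "k \<in> B" for k
    proof -
      have "k < b \<Longrightarrow> k \<le> m"
        unfolding m_def using Max_ge[OF below(1), of k] that by blast
      then show ?thesis
        by linarith
    qed
    moreover have "a \<le> m"
      unfolding m_def using Max_ge[OF below] .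
    ultimately have "(m, b) \<in> part_edges P" "(a, m) \<in> (part_edges P)\<^sup>*"
      using assms(1) less by (auto simp: part_edges_def)
    then show ?thesis
      by simp
  qed simp
qed

lemma part_edges_class:
  assumes P: "partition_on {1..n} P" and B: "B \<in> P" "x \<in> B"
  shows "(part_edges P \<union> (part_edges P)\<inverse>)\<^sup>* `` {x} = B"
proof (intro subset_antisym subsetI)
  fix y assume "y \<in> (part_edges P \<union> (part_edges P)\<inverse>)\<^sup>* `` {x}"
  then have "(x, y) \<in> (part_edges P \<union> (part_edges P)\<inverse>)\<^sup>*"
    by simp
  then show "y \<in> B"
  proof induction
    case (step y z)
    then obtain B' where "B' \<in> P" "y \<in> B'" "z \<in> B'"
      by (auto simp: part_edges_def)
    with step.IH B(1) show ?case
      using partition_on_block_unique[OF P] by blast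
  qed (use B in simp)
next
  fix y assume "y \<in> B"
  then have "(x, y) \<in> (part_edges P)\<^sup>* \<or> (y, x) \<in> (part_edges P)\<^sup>*"
    using part_edges_rtrancl[OF B(1)] B(2) by (meson nat_le_linear)
  then show "y \<in> (part_edges P \<union> (part_edges P)\<inverse>)\<^sup>* `` {x}"
    by (auto simp: rtrancl_converse intro: rtrancl_mono[THEN subsetD])
qed

lemma components_part_edges:
  assumes P: "partition_on {1..n} P"
  shows "components n (part_edges P) = P"
  unfolding components_chain_graph[OF chain_graph_part_edges[OF P]]
proof (intro subset_antisym subsetI)
  fix C assume "C \<in> {1..n} // (part_edges P \<union> (part_edges P)\<inverse>)\<^sup>*"
  then obtain x where x: "x \<in> {1..n}" "C = (part_edges P \<union> (part_edges P)\<inverse>)\<^sup>* `` {x}"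
    by (auto elim: quotientE)
  have "x \<in> \<Union> P"
    using x(1) by (simp add: partition_onD1[OF P, symmetric])
  then show "C \<in> P"
    using part_edges_class[OF P] x(2) by auto
next
  fix B assume B: "B \<in> P"
  then obtain x where x: "x \<in> B"
    using partition_onD3[OF P] by fastforce
  then have "x \<in> {1..n}"
    using B partition_onD1[OF P] by blast
  then show "B \<in> {1..n} // (part_edges P \<union> (part_edges P)\<inverse>)\<^sup>*"
    using part_edges_class[OF P B x] by (auto intro: quotientI)
qed

lemma bij_betw_components:
  "bij_betw (components n) {E. chain_graph n E \<and> Q E} {P. partition_on {1..n} P \<and> Q (part_edges P)}"
proof (rule bij_betw_byWitness[where f' = part_edges])
  show "\<forall>E\<in>{E. chain_graph n E \<and> Q E}. part_edges (components n E) = E"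
    using part_edges_components by blast
  show "\<forall>P\<in>{P. partition_on {1..n} P \<and> Q (part_edges P)}. components n (part_edges P) = P"
    using components_part_edges by blast
  show "components n ` {E. chain_graph n E \<and> Q E} \<subseteq> {P. partition_on {1..n} P \<and> Q (part_edges P)}"
    using partition_on_components part_edges_components by auto
  show "part_edges ` {P. partition_on {1..n} P \<and> Q (part_edges P)} \<subseteq> {E. chain_graph n E \<and> Q E}"
    using chain_graph_part_edges by blast
qed

section \<open>The construction with all \<open>\<xi>\<^sub>i = 1\<close>\<close>

definition opener :: "step \<Rightarrow> bool" where
  "opener s \<longleftrightarrow> s = NE \<or> s = EB"

definition closer :: "step \<Rightarrow> bool" where
  "closer s \<longleftrightarrow> s = SE \<or> s = EB"

lemma step_eqI: "opener s = opener s' \<Longrightarrow> closer s = closer s' \<Longrightarrow> s = s'"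
  by (cases s; cases s') (auto simp: opener_def closer_def)

lemma delta_eq: "delta s = of_bool (opener s) - of_bool (closer s)"
  by (cases s) (auto simp: opener_def closer_def)

lemma ht_take_Suc: "t < length w \<Longrightarrow> ht (take (Suc t) w) = ht (take t w) + delta (w ! t)"
  by (simp add: ht_def take_Suc_conv_app_nth)

lemma phi_step_eq:
  "phi_step sel (V, E) (i, s, k) =
     ((if opener s then insert i else id) (if closer s then V - {sel V k} else V),
      if closer s then insert (sel V k, i) E else E)"
  by (cases s) (auto simp: opener_def closer_def)

fun run :: "(nat set \<Rightarrow> nat \<Rightarrow> nat) \<Rightarrow> step list \<Rightarrow> nat \<Rightarrow> nat set \<times> (nat \<times> nat) set" where
  "run sel w 0 = ({}, {})"
| "run sel w (Suc t) = phi_step sel (run sel w t) (Suc t, w ! t, 1)"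

lemma phi_edges_run: "phi_edges sel w (replicate (length w) 1) = snd (run sel w (length w))"
proof -
  have "foldl (phi_step sel) ({}, {}) (zip [1..<t + 1] (zip (take t w) (replicate t 1)))
      = run sel w t" if "t \<le> length w" for t
    using that
  proof (induction t)
    case (Suc t)
    have "replicate (Suc t) (1::nat) = replicate t 1 @ [1]"
      by (simp add: replicate_append_same)
    with Suc show ?case
      by (simp add: take_Suc_conv_app_nth upt_Suc_append del: replicate_Suc upt_Suc)
  qed simp
  from this[of "length w"] show ?thesis
    by (simp add: phi_edges_def del: upt_Suc)
qed

lemma run_edges_mono: "t \<le> t' \<Longrightarrow> snd (run sel w t) \<subseteq> snd (run sel w t')"
proof (induction t' rule: dec_induct)
  case (step t')
  then show ?case
    by (cases "run sel w t'") (auto simp: phi_step_eq simp del: phi_step.simps)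
qed simp

definition path_of :: "nat \<Rightarrow> (nat \<times> nat) set \<Rightarrow> step list" where
  "path_of n E = map (\<lambda>i. if i \<in> Domain E then if i \<in> Range E then EB else NE
                          else if i \<in> Range E then SE else ER) [1..<n + 1]"

lemma length_path_of [simp]: "length (path_of n E) = n"
  by (simp add: path_of_def)

lemma opener_path_of: "t < n \<Longrightarrow> opener (path_of n E ! t) \<longleftrightarrow> Suc t \<in> Domain E"
  by (simp add: path_of_def opener_def del: upt_Suc)

lemma closer_path_of: "t < n \<Longrightarrow> closer (path_of n E ! t) \<longleftrightarrow> Suc t \<in> Range E"
  by (simp add: path_of_def closer_def del: upt_Suc)

text \<open>When the construction produces \<open>E\<close>, its set \<open>V\<close> after \<open>t\<close> steps is \<open>open_at E t\<close>
  and its edge set is \<open>edges_upto E t\<close>.\<close>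

definition open_at :: "(nat \<times> nat) set \<Rightarrow> nat \<Rightarrow> nat set" where
  "open_at E t = {x. \<exists>y. (x, y) \<in> E \<and> x \<le> t \<and> t < y}"

definition edges_upto :: "(nat \<times> nat) set \<Rightarrow> nat \<Rightarrow> (nat \<times> nat) set" where
  "edges_upto E t = {(x, y) \<in> E. y \<le> t}"

lemma finite_open_at: "finite (open_at E t)"
  by (rule finite_subset[of _ "{..t}"]) (auto simp: open_at_def)

lemma open_at_0: "chain_graph n E \<Longrightarrow> open_at E 0 = {}"
  by (auto simp: open_at_def dest: chain_graph_edge)

lemma open_at_end: "chain_graph n E \<Longrightarrow> open_at E n = {}"
  by (auto simp: open_at_def dest: chain_graph_edge)

lemma closing_edge_open_at: "chain_graph n E \<Longrightarrow> (p, Suc t) \<in> E \<Longrightarrow> p \<in> open_at E t"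
  unfolding open_at_def by (force dest: chain_graph_edge)

lemma open_at_Suc:
  assumes E: "chain_graph n E"
  shows "open_at E (Suc t) =
    (if Suc t \<in> Domain E then insert (Suc t) else id) {x \<in> open_at E t. (x, Suc t) \<notin> E}"
proof (rule set_eqI)
  fix x
  show "x \<in> open_at E (Suc t) \<longleftrightarrow>
    x \<in> (if Suc t \<in> Domain E then insert (Suc t) else id) {x \<in> open_at E t. (x, Suc t) \<notin> E}"
  proof (cases "x = Suc t")
    case True
    then show ?thesis
      by (auto simp: open_at_def dest: chain_graph_edge[OF E])
  next
    case False
    have "(\<exists>y. (x, y) \<in> E \<and> Suc t < y) \<longleftrightarrow> (\<exists>y. (x, y) \<in> E \<and> t < y) \<and> (x, Suc t) \<notin> E"
    proof
      assume "\<exists>y. (x, y) \<in> E \<and> Suc t < y"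
      then obtain y where "(x, y) \<in> E" "Suc t < y"
        by blast
      then show "(\<exists>y. (x, y) \<in> E \<and> t < y) \<and> (x, Suc t) \<notin> E"
        using chain_graph_out_unique[OF E, of x y "Suc t"] by auto
    next
      assume "(\<exists>y. (x, y) \<in> E \<and> t < y) \<and> (x, Suc t) \<notin> E"
      then obtain y where "(x, y) \<in> E" "t < y" "y \<noteq> Suc t"
        by blast
      then show "\<exists>y. (x, y) \<in> E \<and> Suc t < y"
        by (intro exI[of _ y]) simp
    qed
    with False show ?thesis
      by (auto simp: open_at_def le_Suc_eq)
  qed
qed

lemma edges_upto_0: "chain_graph n E \<Longrightarrow> edges_upto E 0 = {}"
  by (auto simp: edges_upto_def dest: chain_graph_edge)

lemma edges_upto_end: "chain_graph n E \<Longrightarrow> edges_upto E n = E"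
  by (auto simp: edges_upto_def dest: chain_graph_edge)

lemma edges_upto_Suc: "edges_upto E (Suc t) = edges_upto E t \<union> {(x, y) \<in> E. y = Suc t}"
  by (auto simp: edges_upto_def)

lemma card_open_at:
  assumes E: "chain_graph n E" and "t \<le> n"
  shows "int (card (open_at E t)) = ht (take t (path_of n E))"
  using assms(2)
proof (induction t)
  case 0
  then show ?case
    by (simp add: open_at_0[OF E] ht_def)
next
  case (Suc t)
  then have t: "t < n"
    by simp
  let ?kept = "{x \<in> open_at E t. (x, Suc t) \<notin> E}"
  have kept: "int (card ?kept) = int (card (open_at E t)) - of_bool (Suc t \<in> Range E)"
  proof (cases "Suc t \<in> Range E")
    case True
    then obtain p where p: "(p, Suc t) \<in> E"
      by blast
    then have "?kept = open_at E t - {p}"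
      using chain_graph_in_unique[OF E] by blast
    moreover have "card (open_at E t) > 0"
      using closing_edge_open_at[OF E p] finite_open_at card_gt_0_iff by blast
    ultimately show ?thesis
      using True closing_edge_open_at[OF E p] finite_open_at by (simp add: of_nat_diff)
  next
    case False
    then have "?kept = open_at E t"
      by blast
    with False show ?thesis
      by simp
  qed
  have "Suc t \<notin> ?kept"
    by (simp add: open_at_def)
  then have "int (card (open_at E (Suc t))) = int (card ?kept) + of_bool (Suc t \<in> Domain E)"
    using finite_open_at[of E t] by (simp add: open_at_Suc[OF E])
  then show ?case
    using Suc.IH t kept ht_take_Suc[of t "path_of n E"]
    by (simp add: delta_eq opener_path_of closer_path_of)
qed

lemma path_of_in_Mrb:
  assumes E: "chain_graph n E"
  shows "path_of n E \<in> Mrb n"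
  unfolding Mrb_def motzkin_def
proof (intro CollectI conjI allI impI)
  show "length (path_of n E) = n"
    by simp
next
  fix k assume "k \<le> length (path_of n E)"
  then show "0 \<le> ht (take k (path_of n E))"
    using card_open_at[OF E, of k] by simp
next
  show "ht (path_of n E) = 0"
    using card_open_at[OF E, of n] by (simp add: open_at_end[OF E])
next
  fix i assume i: "i < length (path_of n E)" and "path_of n E ! i = EB"
  then have "Suc i \<in> Range E"
    using closer_path_of[of i n E] by (simp add: closer_def)
  then have "card (open_at E i) > 0"
    using closing_edge_open_at[OF E] finite_open_at card_gt_0_iff by blast
  then show "0 < ht (take i (path_of n E))"
    using card_open_at[OF E, of i] i by simp
qed

definition follows_selector :: "(nat set \<Rightarrow> nat \<Rightarrow> nat) \<Rightarrow> (nat \<times> nat) set \<Rightarrow> bool" where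
  "follows_selector sel E \<longleftrightarrow> (\<forall>p t. (p, Suc t) \<in> E \<longrightarrow> sel (open_at E t) 1 = p)"

lemma run_Suc_simulates:
  assumes E: "chain_graph n E" and t: "t < n" and w: "w ! t = path_of n E ! t"
    and run: "run sel w t = (open_at E t, edges_upto E t)"
    and sel: "\<And>p. (p, Suc t) \<in> E \<Longrightarrow> sel (open_at E t) 1 = p"
  shows "run sel w (Suc t) = (open_at E (Suc t), edges_upto E (Suc t))"
proof -
  have opener: "opener (w ! t) \<longleftrightarrow> Suc t \<in> Domain E"
    and closer: "closer (w ! t) \<longleftrightarrow> Suc t \<in> Range E"
    using w opener_path_of[OF t] closer_path_of[OF t] by simp_all
  show ?thesis
  proof (cases "Suc t \<in> Range E")
    case True
    then obtain p where p: "(p, Suc t) \<in> E"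
      by blast
    have "{x \<in> open_at E t. (x, Suc t) \<notin> E} = open_at E t - {p}"
      using p chain_graph_in_unique[OF E] by blast
    moreover have "edges_upto E (Suc t) = insert (p, Suc t) (edges_upto E t)"
      using p chain_graph_in_unique[OF E] by (auto simp: edges_upto_Suc)
    ultimately show ?thesis
      using True run sel[OF p]
      by (simp add: phi_step_eq opener closer open_at_Suc[OF E] del: phi_step.simps)
  next
    case False
    then have "{x \<in> open_at E t. (x, Suc t) \<notin> E} = open_at E t"
      and "edges_upto E (Suc t) = edges_upto E t"
      by (auto simp: edges_upto_Suc)
    with False run show ?thesis
      by (simp add: phi_step_eq opener closer open_at_Suc[OF E] del: phi_step.simps)
  qed
qed

lemma run_path_of:
  assumes E: "chain_graph n E" and sel: "follows_selector sel E" and "t \<le> n"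
  shows "run sel (path_of n E) t = (open_at E t, edges_upto E t)"
  using assms(3)
proof (induction t)
  case 0
  then show ?case
    by (simp add: open_at_0[OF E] edges_upto_0[OF E])
next
  case (Suc t)
  with sel show ?case
    by (intro run_Suc_simulates[OF E]) (auto simp: follows_selector_def)
qed

section \<open>Runs on restricted bicolored Motzkin paths\<close>

definition selector :: "(nat set \<Rightarrow> nat \<Rightarrow> nat) \<Rightarrow> bool" where
  "selector sel \<longleftrightarrow> (\<forall>V. finite V \<and> V \<noteq> {} \<longrightarrow> sel V 1 \<in> V)"

definition openers :: "step list \<Rightarrow> nat \<Rightarrow> nat set" where
  "openers w t = {i \<in> {1..t}. opener (w ! (i - 1))}"

definition closers :: "step list \<Rightarrow> nat \<Rightarrow> nat set" where
  "closers w t = {i \<in> {1..t}. closer (w ! (i - 1))}"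

lemma openers_Suc: "openers w (Suc t) = (if opener (w ! t) then insert (Suc t) else id) (openers w t)"
  by (auto simp: openers_def le_Suc_eq)

lemma closers_Suc: "closers w (Suc t) = (if closer (w ! t) then insert (Suc t) else id) (closers w t)"
  by (auto simp: closers_def le_Suc_eq)

definition run_invariant :: "step list \<Rightarrow> nat \<Rightarrow> nat set \<times> (nat \<times> nat) set \<Rightarrow> bool" where
  "run_invariant w t = (\<lambda>(V, E). finite V \<and> int (card V) = ht (take t w) \<and> chain_graph t E \<and>
     V \<inter> Domain E = {} \<and> V \<union> Domain E = openers w t \<and> Range E = closers w t)"

lemma run_invariant_step:
  assumes inv: "run_invariant w t (V, E)" and t: "t < length w"
    and sel: "closer (w ! t) \<Longrightarrow> sel V 1 \<in> V"
  shows "run_invariant w (Suc t) (phi_step sel (V, E) (Suc t, w ! t, 1))"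
proof -
  have fin: "finite V" and card: "int (card V) = ht (take t w)" and E: "chain_graph t E"
    and disj: "V \<inter> Domain E = {}" and opened: "V \<union> Domain E = openers w t"
    and closed: "Range E = closers w t"
    using inv by (auto simp: run_invariant_def)
  have V_le: "1 \<le> x \<and> x \<le> t" if "x \<in> V" for x
    using that opened by (auto simp: openers_def)
  then have new: "Suc t \<notin> V" "Suc t \<notin> Domain E" "Suc t \<notin> Range E"
    using chain_graph_edge[OF E] by fastforce+
  have "int (card ((if opener (w ! t) then insert (Suc t) else id)
      (if closer (w ! t) then V - {sel V 1} else V)))
    = int (card V) + of_bool (opener (w ! t)) - of_bool (closer (w ! t))"
  proof -
    have "closer (w ! t) \<Longrightarrow> card V > 0"
      using fin sel card_gt_0_iff by blast
    then show ?thesis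
      using fin sel new(1) by (auto simp: of_nat_diff)
  qed
  moreover have "chain_graph (Suc t) (insert (sel V 1, Suc t) E)" if "closer (w ! t)"
    using chain_graph_insert[OF E] sel[OF that] disj V_le by blast
  moreover have "chain_graph (Suc t) E"
    using chain_graph_mono[OF E] by simp
  ultimately show ?thesis
    unfolding run_invariant_def using fin card disj opened closed sel new
    by (auto simp: phi_step_eq ht_take_Suc[OF t] delta_eq openers_Suc closers_Suc
        simp del: phi_step.simps)
qed

lemma Mrb_closer_height_pos:
  assumes w: "w \<in> Mrb n" and t: "t < n" and "closer (w ! t)"
  shows "ht (take t w) > 0"
proof -
  have "w ! t = SE \<or> w ! t = EB"
    using \<open>closer (w ! t)\<close> by (simp add: closer_def)
  moreover have "t < length w" "0 \<le> ht (take (Suc t) w)" "w ! t = EB \<longrightarrow> 0 < ht (take t w)"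
    using w t by (auto simp: Mrb_def motzkin_def)
  ultimately show ?thesis
    using ht_take_Suc by auto
qed

lemma run_satisfies_invariant:
  assumes w: "w \<in> Mrb n" and sel: "selector sel" and "t \<le> n"
  shows "run_invariant w t (run sel w t)"
  using assms(3)
proof (induction t)
  case 0
  show ?case
    by (simp add: run_invariant_def ht_def chain_graph_def openers_def closers_def)
next
  case (Suc t)
  obtain V E where VE: "run sel w t = (V, E)"
    by fastforce
  have inv: "run_invariant w t (V, E)"
    using Suc VE by simp
  \<comment> \<open>\<open>card V\<close> is the current height, which is positive before every closing step.\<close>
  have "sel V 1 \<in> V" if "closer (w ! t)"
    using inv sel Mrb_closer_height_pos[OF w _ that] Suc.prems
    by (fastforce simp: run_invariant_def selector_def)
  then show ?case
    using run_invariant_step[OF inv] Suc.prems w VE by (simp add: Mrb_def)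
qed

lemma run_edges:
  assumes w: "w \<in> Mrb n" and sel: "selector sel"
  defines "E \<equiv> snd (run sel w n)"
  shows chain_graph_run_edges: "chain_graph n E" and path_of_run_edges: "path_of n E = w"
proof -
  obtain V where VE: "run sel w n = (V, E)"
    unfolding E_def by (metis prod.collapse)
  have len: "length w = n" and "ht w = 0"
    using w by (auto simp: Mrb_def motzkin_def)
  with run_satisfies_invariant[OF w sel, of n] VE
  have "V = {}" and E: "chain_graph n E" "Domain E = openers w n" "Range E = closers w n"
    by (auto simp: run_invariant_def)
  then show "chain_graph n E"
    by simp
  show "path_of n E = w"
  proof (rule nth_equalityI)
    fix i assume "i < length (path_of n E)"
    then have "i < n"
      by simp
    then show "path_of n E ! i = w ! i"
      using E by (intro step_eqI) (auto simp: opener_path_of closer_path_of openers_def closers_def)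
  qed (simp add: len)
qed

lemma run_selects_partner:
  assumes w: "w \<in> Mrb n" and sel: "selector sel" and p: "(p, Suc t) \<in> snd (run sel w n)"
  shows "sel (fst (run sel w t)) 1 = p"
proof -
  let ?E = "snd (run sel w n)"
  have t: "t < n"
    using chain_graph_edge[OF chain_graph_run_edges[OF w sel] p] by simp
  then have "closer (w ! t)"
    using p closer_path_of[OF t, of ?E] path_of_run_edges[OF w sel] by auto
  then have "(sel (fst (run sel w t)) 1, Suc t) \<in> snd (run sel w (Suc t))"
    by (cases "run sel w t") (simp add: phi_step_eq del: phi_step.simps)
  then have "(sel (fst (run sel w t)) 1, Suc t) \<in> ?E"
    using run_edges_mono[of "Suc t" n sel w] t by auto
  then show ?thesis
    using chain_graph_in_unique[OF chain_graph_run_edges[OF w sel] _ p] by simp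
qed

lemma run_simulates:
  assumes w: "w \<in> Mrb n" and sel: "selector sel" and "t \<le> n"
  defines "E \<equiv> snd (run sel w n)"
  shows "run sel w t = (open_at E t, edges_upto E t)"
  using assms(3)
proof (induction t)
  case 0
  then show ?case
    using chain_graph_run_edges[OF w sel] by (simp add: E_def open_at_0 edges_upto_0)
next
  case (Suc t)
  have IH: "run sel w t = (open_at E t, edges_upto E t)"
    using Suc by simp
  show ?case
  proof (rule run_Suc_simulates[OF _ _ _ IH])
    show "chain_graph n E" "w ! t = path_of n E ! t"
      using chain_graph_run_edges[OF w sel] path_of_run_edges[OF w sel] by (simp_all add: E_def)
    show "t < n"
      using Suc.prems by simp
    show "sel (open_at E t) 1 = p" if "(p, Suc t) \<in> E" for p
      using run_selects_partner[OF w sel that[unfolded E_def]] IH by simp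
  qed
qed

lemma follows_selector_run_edges:
  assumes w: "w \<in> Mrb n" and sel: "selector sel"
  shows "follows_selector sel (snd (run sel w n))"
  unfolding follows_selector_def
proof (intro allI impI)
  fix p t assume p: "(p, Suc t) \<in> snd (run sel w n)"
  then have "Suc t \<le> n"
    using chain_graph_edge[OF chain_graph_run_edges[OF w sel] p] by simp
  then show "sel (open_at (snd (run sel w n)) t) 1 = p"
    using run_selects_partner[OF w sel p] run_simulates[OF w sel, of t] by simp
qed

theorem bij_betw_run_edges:
  assumes sel: "selector sel"
  shows "bij_betw (\<lambda>w. snd (run sel w n)) (Mrb n) {E. chain_graph n E \<and> follows_selector sel E}"
proof (rule bij_betw_byWitness[where f' = "path_of n"])
  show "\<forall>w\<in>Mrb n. path_of n (snd (run sel w n)) = w"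
    using path_of_run_edges[OF _ sel] by blast
  show "\<forall>E\<in>{E. chain_graph n E \<and> follows_selector sel E}. snd (run sel (path_of n E) n) = E"
    using run_path_of edges_upto_end by auto
  show "(\<lambda>w. snd (run sel w n)) ` Mrb n \<subseteq> {E. chain_graph n E \<and> follows_selector sel E}"
    using chain_graph_run_edges[OF _ sel] follows_selector_run_edges[OF _ sel] by blast
  show "path_of n ` {E. chain_graph n E \<and> follows_selector sel E} \<subseteq> Mrb n"
    using path_of_in_Mrb by blast
qed

section \<open>Stacks give noncrossing, queues nonnesting partitions\<close>

lemma kth_smallest_1: "finite V \<Longrightarrow> V \<noteq> {} \<Longrightarrow> kth_smallest V 1 = Min V"
  by (simp add: kth_smallest_def sorted_list_of_set_nonempty)

lemma kth_largest_1:
  assumes V: "finite V" "V \<noteq> {}"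
  shows "kth_largest V 1 = Max V"
proof -
  let ?xs = "sorted_list_of_set V"
  have ne: "?xs \<noteq> []"
    using V by simp
  then have "kth_largest V 1 = last ?xs"
    by (simp add: kth_largest_def hd_conv_nth[symmetric] hd_rev)
  also have "\<dots> = Max V"
  proof (rule sym, rule Max_eqI[OF V(1)])
    fix x assume "x \<in> V"
    then obtain i where "i < length ?xs" "?xs ! i = x"
      using V(1) by (metis in_set_conv_nth set_sorted_list_of_set)
    then show "x \<le> last ?xs"
      using sorted_nth_mono[OF sorted_sorted_list_of_set[of V], of i "length ?xs - 1"] ne
      by (simp add: last_conv_nth)
  next
    show "last ?xs \<in> V"
      using last_in_set[OF ne] V(1) by simp
  qed
  finally show ?thesis .
qed

lemma selector_kth_smallest: "selector kth_smallest"
  unfolding selector_def using kth_smallest_1 Min_in by metis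

lemma selector_kth_largest: "selector kth_largest"
  unfolding selector_def using kth_largest_1 Max_in by metis

definition crossing_free :: "(nat \<times> nat) set \<Rightarrow> bool" where
  "crossing_free E \<longleftrightarrow>
     \<not> (\<exists>i1 j1 i2 j2. (i1, j1) \<in> E \<and> (i2, j2) \<in> E \<and> i1 < i2 \<and> i2 < j1 \<and> j1 < j2)"

definition nesting_free :: "(nat \<times> nat) set \<Rightarrow> bool" where
  "nesting_free E \<longleftrightarrow>
     \<not> (\<exists>i1 j1 i2 j2. (i1, j1) \<in> E \<and> (i2, j2) \<in> E \<and> i1 < i2 \<and> i2 < j2 \<and> j2 < j1)"

lemma open_at_closing_other:
  assumes E: "chain_graph n E" and p: "(p, Suc t) \<in> E" and x: "x \<in> open_at E t" "x \<noteq> p"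
  obtains y where "(x, y) \<in> E" "x \<le> t" "Suc t < y"
proof -
  obtain y where y: "(x, y) \<in> E" "x \<le> t" "t < y"
    using x(1) by (auto simp: open_at_def)
  moreover have "y \<noteq> Suc t"
    using chain_graph_in_unique[OF E _ p] y(1) x(2) by blast
  ultimately show ?thesis
    using that by simp
qed

lemma follows_kth_largest_iff:
  assumes E: "chain_graph n E"
  shows "follows_selector kth_largest E \<longleftrightarrow> crossing_free E"
proof
  assume follows: "follows_selector kth_largest E"
  show "crossing_free E"
    unfolding crossing_free_def
  proof clarify
    fix i1 j1 i2 j2
    assume e: "(i1, j1) \<in> E" "(i2, j2) \<in> E" and "i1 < i2" "i2 < j1" "j1 < j2"
    moreover obtain t where "j1 = Suc t"
      using \<open>i2 < j1\<close> less_imp_Suc_add by blast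
    ultimately have t: "j1 = Suc t" "i2 \<in> open_at E t"
      by (auto simp: open_at_def)
    then have ne: "open_at E t \<noteq> {}"
      by blast
    have "kth_largest (open_at E t) 1 = i1"
      using follows e t(1) unfolding follows_selector_def by blast
    then have "Max (open_at E t) = i1"
      using kth_largest_1[OF finite_open_at ne] by simp
    with t(2) \<open>i1 < i2\<close> show False
      using Max_ge[OF finite_open_at] by fastforce
  qed
next
  assume cf: "crossing_free E"
  show "follows_selector kth_largest E"
    unfolding follows_selector_def
  proof (intro allI impI)
    fix p t assume p: "(p, Suc t) \<in> E"
    have "Max (open_at E t) = p"
    proof (rule Max_eqI[OF finite_open_at])
      fix x assume x: "x \<in> open_at E t"
      show "x \<le> p"
      proof (rule ccontr)
        assume "\<not> x \<le> p"
        then obtain y where "(x, y) \<in> E" "x \<le> t" "Suc t < y"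
          using open_at_closing_other[OF E p x] by force
        with p \<open>\<not> x \<le> p\<close> cf show False
          unfolding crossing_free_def by (meson le_imp_less_Suc not_le)
      qed
    qed (rule closing_edge_open_at[OF E p])
    then show "kth_largest (open_at E t) 1 = p"
      using kth_largest_1[OF finite_open_at] closing_edge_open_at[OF E p] by auto
  qed
qed

lemma follows_kth_smallest_iff:
  assumes E: "chain_graph n E"
  shows "follows_selector kth_smallest E \<longleftrightarrow> nesting_free E"
proof
  assume follows: "follows_selector kth_smallest E"
  show "nesting_free E"
    unfolding nesting_free_def
  proof clarify
    fix i1 j1 i2 j2
    assume e: "(i1, j1) \<in> E" "(i2, j2) \<in> E" and "i1 < i2" "i2 < j2" "j2 < j1"
    moreover obtain t where "j2 = Suc t"
      using \<open>i2 < j2\<close> less_imp_Suc_add by blast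
    ultimately have t: "j2 = Suc t" "i1 \<in> open_at E t"
      by (auto simp: open_at_def)
    then have ne: "open_at E t \<noteq> {}"
      by blast
    have "kth_smallest (open_at E t) 1 = i2"
      using follows e t(1) unfolding follows_selector_def by blast
    then have "Min (open_at E t) = i2"
      using kth_smallest_1[OF finite_open_at ne] by simp
    with t(2) \<open>i1 < i2\<close> show False
      using Min_le[OF finite_open_at] by fastforce
  qed
next
  assume nf: "nesting_free E"
  show "follows_selector kth_smallest E"
    unfolding follows_selector_def
  proof (intro allI impI)
    fix p t assume p: "(p, Suc t) \<in> E"
    have "Min (open_at E t) = p"
    proof (rule Min_eqI[OF finite_open_at])
      fix x assume x: "x \<in> open_at E t"
      show "p \<le> x"
      proof (rule ccontr)
        assume "\<not> p \<le> x"
        then obtain y where "(x, y) \<in> E" "x \<le> t" "Suc t < y"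
          using open_at_closing_other[OF E p x] by force
        with p \<open>\<not> p \<le> x\<close> chain_graph_edge[OF E p] nf show False
          unfolding nesting_free_def by (meson not_le)
      qed
    qed (rule closing_edge_open_at[OF E p])
    then show "kth_smallest (open_at E t) 1 = p"
      using kth_smallest_1[OF finite_open_at] closing_edge_open_at[OF E p] by auto
  qed
qed

lemma bij_betw_components_phi_edges:
  assumes sel: "selector sel" and Q: "\<And>E. chain_graph n E \<Longrightarrow> follows_selector sel E \<longleftrightarrow> Q E"
  shows "bij_betw (\<lambda>w. components (length w) (phi_edges sel w (replicate n 1)))
    (Mrb n) {P. partition_on {1..n} P \<and> Q (part_edges P)}"
proof -
  have eq: "{E. chain_graph n E \<and> follows_selector sel E} = {E. chain_graph n E \<and> Q E}"
    using Q by blast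
  have "bij_betw (\<lambda>w. snd (run sel w n)) (Mrb n) {E. chain_graph n E \<and> Q E}"
    using bij_betw_run_edges[OF sel, of n] unfolding eq .
  then have bij: "bij_betw (components n \<circ> (\<lambda>w. snd (run sel w n)))
    (Mrb n) {P. partition_on {1..n} P \<and> Q (part_edges P)}"
    using bij_betw_components by (rule bij_betw_trans)
  have "components (length w) (phi_edges sel w (replicate n 1))
      = (components n \<circ> (\<lambda>w. snd (run sel w n))) w" if "w \<in> Mrb n" for w
    using that phi_edges_run[of sel w] by (simp add: Mrb_def)
  then show ?thesis
    by (subst bij_betw_cong) (use bij in auto)
qed

theorem corollary3p3:
  fixes n :: nat
  assumes "n \<ge> 1"
  shows "bij_betw (\<lambda>w. phi_r w (replicate n 1)) (Mrb n) (NC n)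
       \<and> bij_betw (\<lambda>w. phi_l w (replicate n 1)) (Mrb n) (NN n)"
proof
  have "NC n = {P. partition_on {1..n} P \<and> crossing_free (part_edges P)}"
    by (simp add: NC_def noncrossing_def crossing_free_def)
  then show "bij_betw (\<lambda>w. phi_r w (replicate n 1)) (Mrb n) (NC n)"
    unfolding phi_r_def
    using bij_betw_components_phi_edges[OF selector_kth_largest follows_kth_largest_iff] by simp
next
  have "NN n = {P. partition_on {1..n} P \<and> nesting_free (part_edges P)}"
    by (simp add: NN_def nonnesting_def nesting_free_def)
  then show "bij_betw (\<lambda>w. phi_l w (replicate n 1)) (Mrb n) (NN n)"
    unfolding phi_l_def
    using bij_betw_components_phi_edges[OF selector_kth_smallest follows_kth_smallest_iff] by simp
qed

end
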